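(* For every $k\ge1$, every $1\le p\le k$, all integers $m_1,\dots,m_k$ and every $n\ge0$, $$\mathcal D_k(m_1,\dots,m_{p-1},m_p,m_{p+1},\dots,m_k;n)=\mathcal D_k(m_1,\dots,m_{p-1},-m_p,m_{p+1},\dots,m_k;n).$$
   Context: A partition is a finite nonincreasing sequence $\lambda=(\lambda_1,\dots,\lambda_r)$ of positive integers (possibly empty); $l(\lambda)=r$, $|\lambda|=\sum\lambda_i$, $\lambda_1$ the largest part. Let $k\ge1$. A $k$-marked Durfee symbol of $n$ is an array $\eta=\begin{pmatrix}\alpha^k,&\dots,&\alpha^1\\ \beta^k,&\dots,&\beta^1\end{pmatrix}_D$ consisting of an integer $D\ge0$ and $2k$ partitions $\alpha^i,\beta^i$ with $\sum_{i=1}^k(|\alpha^i|+|\beta^i|)+D^2=n$, such that: (1) $\alpha^i$ is nonempty for $1\le i<k$; (2) for $1\le i<k$ every part of $\beta^i$ is $\le\alpha^i_1$, and for $2\le i\le k$ every part of $\alpha^i$ and every part of $\beta^i$ is $\ge\alpha^{i-1}_1$; (3) all parts of $\alpha^k$ and $\beta^k$ are $\le D$. The $i$th rank is $\rho_i(\eta)=l(\alpha^i)-l(\beta^i)-1$ for $1\le i<k$ and $\rho_k(\eta)=l(\alpha^k)-l(\beta^k)$. $\mathcal D_k(m_1,\dots,m_k;n)$ is the number of $k$-marked Durfee symbols of $n$ with $\rho_i=m_i$ for all $i$. *)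

theory Defs
  imports Main
begin

definition is_partition :: "nat list \<Rightarrow> bool" where
  "is_partition lam \<longleftrightarrow> sorted_wrt (\<ge>) lam \<and> (\<forall>x\<in>set lam. 0 < x)"

text \<open>A k-marked Durfee symbol of n is encoded as a triple (D, as, bs) where
  as ! (i-1) is alpha^i and bs ! (i-1) is beta^i, for 1 <= i <= k.\<close>
definition is_durfee_symbol :: "nat \<Rightarrow> nat \<Rightarrow> nat \<times> nat list list \<times> nat list list \<Rightarrow> bool" where
  "is_durfee_symbol k n s \<longleftrightarrow> (case s of (D, as, bs) \<Rightarrow>
     length as = k \<and> length bs = k \<and>
     (\<forall>i<k. is_partition (as ! i) \<and> is_partition (bs ! i)) \<and>
     (\<Sum>i<k. sum_list (as ! i) + sum_list (bs ! i)) + D\<^sup>2 = n \<and>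
     (\<forall>i. 1 \<le> i \<and> i < k \<longrightarrow> as ! (i - 1) \<noteq> []) \<and>
     (\<forall>i. 1 \<le> i \<and> i < k \<longrightarrow> (\<forall>x\<in>set (bs ! (i - 1)). x \<le> hd (as ! (i - 1)))) \<and>
     (\<forall>i. 2 \<le> i \<and> i \<le> k \<longrightarrow>
        (\<forall>x\<in>set (as ! (i - 1)) \<union> set (bs ! (i - 1)). hd (as ! (i - 2)) \<le> x)) \<and>
     (\<forall>x\<in>set (as ! (k - 1)) \<union> set (bs ! (k - 1)). x \<le> D))"

definition durfee_rank :: "nat \<Rightarrow> nat \<Rightarrow> nat \<times> nat list list \<times> nat list list \<Rightarrow> int" where
  "durfee_rank k i s = (case s of (D, as, bs) \<Rightarrow>
     int (length (as ! (i - 1))) - int (length (bs ! (i - 1))) - (if i < k then 1 else 0))"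

text \<open>D_k(m_1,...,m_k; n), with ms ! (i-1) = m_i.\<close>
definition Dk :: "nat \<Rightarrow> int list \<Rightarrow> nat \<Rightarrow> nat" where
  "Dk k ms n = card {s. is_durfee_symbol k n s \<and>
      (\<forall>i. 1 \<le> i \<and> i \<le> k \<longrightarrow> durfee_rank k i s = ms ! (i - 1))}"

end

theory Submission
  imports Defs
begin

(* For a fixed column q (the ranks are indexed so that column q carries rho_(q+1))
   there is an involution on Durfee symbols that negates rho_(q+1) and keeps all
   other ranks:
   - for a non-last column, move the largest part of alpha^(q+1) onto the front
     of beta^(q+1) and let the rest of alpha^(q+1) become the new beta^(q+1);
     the new alpha still starts with the same largest part, so the constraints
     linking neighbouring columns are untouched, and
     l(alpha') - l(beta') - 1 = -(l(alpha) - l(beta) - 1);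
   - for the last column, simply swap alpha^k and beta^k. *)

text \<open>Removing the largest part of a partition, or prepending a new largest part,
  gives a partition again; these are the two halves of the non-last column move.\<close>

lemma is_partition_tl: "is_partition a \<Longrightarrow> is_partition (tl a)"
  unfolding is_partition_def by (cases a) auto

lemma is_partition_tl_le_hd: "is_partition a \<Longrightarrow> \<forall>x\<in>set (tl a). x \<le> hd a"
  unfolding is_partition_def by (cases a) auto

lemma is_partition_Cons:
  "is_partition b \<Longrightarrow> 0 < h \<Longrightarrow> \<forall>x\<in>set b. x \<le> h \<Longrightarrow> is_partition (h # b)"
  unfolding is_partition_def by auto

text \<open>Only these data enter the constraints between columns.\<close>

lemma durfee_symbol_update_column:
  assumes S: "is_durfee_symbol k n (D, as, bs)" and q: "q < k"
    and part: "is_partition a'" "is_partition b'"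
    and size: "sum_list a' + sum_list b' = sum_list (as ! q) + sum_list (bs ! q)"
    and parts: "set a' \<union> set b' = set (as ! q) \<union> set (bs ! q)"
    and head: "Suc q < k \<Longrightarrow> a' \<noteq> [] \<and> hd a' = hd (as ! q) \<and> (\<forall>x\<in>set b'. x \<le> hd a')"
  shows "is_durfee_symbol k n (D, as[q := a'], bs[q := b'])"
proof -
  define as' where "as' = as[q := a']"
  define bs' where "bs' = bs[q := b']"
  from S have len: "length as = k" "length bs = k"
    and P: "\<forall>i<k. is_partition (as ! i) \<and> is_partition (bs ! i)"
    and total: "(\<Sum>i<k. sum_list (as ! i) + sum_list (bs ! i)) + D\<^sup>2 = n"
    and ne: "\<forall>i. 1 \<le> i \<and> i < k \<longrightarrow> as ! (i - 1) \<noteq> []"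
    and bnd: "\<forall>i. 1 \<le> i \<and> i < k \<longrightarrow> (\<forall>x\<in>set (bs ! (i - 1)). x \<le> hd (as ! (i - 1)))"
    and chain: "\<forall>i. 2 \<le> i \<and> i \<le> k \<longrightarrow>
        (\<forall>x\<in>set (as ! (i - 1)) \<union> set (bs ! (i - 1)). hd (as ! (i - 2)) \<le> x)"
    and last: "\<forall>x\<in>set (as ! (k - 1)) \<union> set (bs ! (k - 1)). x \<le> D"
    unfolding is_durfee_symbol_def by auto
  have parts': "set (as' ! j) \<union> set (bs' ! j) = set (as ! j) \<union> set (bs ! j)" if "j < k" for j
    using that len parts by (cases "j = q") (auto simp: as'_def bs'_def)
  have hd': "hd (as' ! j) = hd (as ! j)" if "Suc j < k" for j
    using that len head by (cases "j = q") (auto simp: as'_def)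
  have "(\<Sum>i<k. sum_list (as' ! i) + sum_list (bs' ! i)) = (\<Sum>i<k. sum_list (as ! i) + sum_list (bs ! i))"
    using len size q by (intro sum.cong) (auto simp: as'_def bs'_def nth_list_update)
  moreover have "\<forall>i<k. is_partition (as' ! i) \<and> is_partition (bs' ! i)"
    using P len part q by (auto simp: as'_def bs'_def nth_list_update)
  moreover have "\<forall>i. 1 \<le> i \<and> i < k \<longrightarrow> as' ! (i - 1) \<noteq> [] \<and>
      (\<forall>x\<in>set (bs' ! (i - 1)). x \<le> hd (as' ! (i - 1)))"
    using ne bnd len head q by (auto simp: as'_def bs'_def nth_list_update)
  moreover have "\<forall>i. 2 \<le> i \<and> i \<le> k \<longrightarrow>
      (\<forall>x\<in>set (as' ! (i - 1)) \<union> set (bs' ! (i - 1)). hd (as' ! (i - 2)) \<le> x)"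
  proof (intro allI impI)
    fix i assume i: "2 \<le> i \<and> i \<le> k"
    then have "i - 1 < k" "Suc (i - 2) < k" by arith+
    with parts' hd' chain i show "\<forall>x\<in>set (as' ! (i - 1)) \<union> set (bs' ! (i - 1)). hd (as' ! (i - 2)) \<le> x"
      by auto
  qed
  moreover have "\<forall>x\<in>set (as' ! (k - 1)) \<union> set (bs' ! (k - 1)). x \<le> D"
    using last parts'[of "k - 1"] q by simp
  ultimately show ?thesis
    using len total unfolding is_durfee_symbol_def as'_def bs'_def by auto
qed

definition rank_flip :: "nat \<Rightarrow> nat \<Rightarrow> nat \<times> nat list list \<times> nat list list
    \<Rightarrow> nat \<times> nat list list \<times> nat list list" where
  "rank_flip k q s = (case s of (D, as, bs) \<Rightarrow> if Suc q < k
     then (D, as[q := hd (as ! q) # bs ! q], bs[q := tl (as ! q)])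
     else (D, as[q := bs ! q], bs[q := as ! q]))"

lemma durfee_symbol_columns:
  assumes "is_durfee_symbol k n (D, as, bs)"
  shows "length as = k" "length bs = k" "\<And>j. Suc j < k \<Longrightarrow> as ! j \<noteq> []"
    "\<And>j. j < k \<Longrightarrow> is_partition (as ! j) \<and> is_partition (bs ! j)"
    "\<And>j. Suc j < k \<Longrightarrow> \<forall>x\<in>set (bs ! j). x \<le> hd (as ! j)"
  using assms unfolding is_durfee_symbol_def
  by (auto dest!: spec[where x = "Suc _"])

lemma rank_flip_durfee_symbol:
  assumes S: "is_durfee_symbol k n s" and q: "q < k"
  shows "is_durfee_symbol k n (rank_flip k q s)"
proof -
  obtain D as bs where s: "s = (D, as, bs)" by (cases s)
  note col = durfee_symbol_columns[OF S[unfolded s]]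
  show ?thesis
  proof (cases "Suc q < k")
    case True
    then obtain h r where ar: "as ! q = h # r" using col(3) by (cases "as ! q") auto
    have hr: "is_partition (h # r)" and b: "is_partition (bs ! q)" and b_le: "\<forall>x\<in>set (bs ! q). x \<le> h"
      using col(4)[OF q] col(5)[OF True] ar by auto
    have "0 < h" using hr unfolding is_partition_def by simp
    then have "is_partition (h # bs ! q)" using is_partition_Cons[OF b _ b_le] by blast
    moreover have "is_partition r" using is_partition_tl[OF hr] by simp
    moreover have "\<forall>x\<in>set r. x \<le> h" using is_partition_tl_le_hd[OF hr] by simp
    ultimately have "is_durfee_symbol k n (D, as[q := h # bs ! q], bs[q := r])"
      using True ar by (intro durfee_symbol_update_column[OF S[unfolded s] q]) auto
    then show ?thesis using True by (simp add: rank_flip_def s ar)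
  next
    case False
    have "is_durfee_symbol k n (D, as[q := bs ! q], bs[q := as ! q])"
      using col(4)[OF q] False
      by (intro durfee_symbol_update_column[OF S[unfolded s] q]) (auto simp: Un_commute)
    then show ?thesis using False by (simp add: rank_flip_def s)
  qed
qed

text \<open>The flip is an involution; for a non-last column this uses that alpha is nonempty.\<close>

lemma rank_flip_involution:
  assumes S: "is_durfee_symbol k n s" and q: "q < k"
  shows "rank_flip k q (rank_flip k q s) = s"
proof -
  obtain D as bs where s: "s = (D, as, bs)" by (cases s)
  note col = durfee_symbol_columns[OF S[unfolded s]]
  show ?thesis
  proof (cases "Suc q < k")
    case True
    then show ?thesis using col(1-3) q by (simp add: rank_flip_def s)
  next
    case False
    then show ?thesis using col(1,2) q by (simp add: rank_flip_def s list_update_swap)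
  qed
qed

lemma rank_flip_rank:
  assumes S: "is_durfee_symbol k n s" and q: "q < k" and i: "1 \<le> i" "i \<le> k"
  shows "durfee_rank k i (rank_flip k q s) =
    (if i = Suc q then - durfee_rank k i s else durfee_rank k i s)"
proof -
  obtain D as bs where s: "s = (D, as, bs)" by (cases s)
  note col = durfee_symbol_columns[OF S[unfolded s]]
  show ?thesis
  proof (cases "Suc q < k")
    case True
    then obtain h r where "as ! q = h # r" using col(3) by (cases "as ! q") auto
    then show ?thesis
      using True col(1,2) q i by (auto simp: rank_flip_def s durfee_rank_def nth_list_update)
  next
    case False
    then show ?thesis using col(1,2) q i by (auto simp: rank_flip_def s durfee_rank_def nth_list_update)
  qed
qed

definition symbols_with_ranks :: "nat \<Rightarrow> int list \<Rightarrow> nat \<Rightarrow> (nat \<times> nat list list \<times> nat list list) set" where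
  "symbols_with_ranks k ms n = {s. is_durfee_symbol k n s \<and>
      (\<forall>i. 1 \<le> i \<and> i \<le> k \<longrightarrow> durfee_rank k i s = ms ! (i - 1))}"

lemma rank_flip_maps:
  assumes q: "q < k" and len: "length ms = k" and s: "s \<in> symbols_with_ranks k ms n"
  shows "rank_flip k q s \<in> symbols_with_ranks k (ms[q := - (ms ! q)]) n"
proof -
  have S: "is_durfee_symbol k n s" and R: "\<And>i. 1 \<le> i \<Longrightarrow> i \<le> k \<Longrightarrow> durfee_rank k i s = ms ! (i - 1)"
    using s unfolding symbols_with_ranks_def by auto
  have "durfee_rank k i (rank_flip k q s) = ms[q := - (ms ! q)] ! (i - 1)"
    if "1 \<le> i" "i \<le> k" for i
    using rank_flip_rank[OF S q that] R[OF that] that len q by (cases "i = Suc q") (auto simp: nth_list_update)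
  then show ?thesis using rank_flip_durfee_symbol[OF S q] unfolding symbols_with_ranks_def by auto
qed

theorem mainTheorem10:
  fixes k p n :: nat and ms :: "int list"
  assumes "1 \<le> k" and "1 \<le> p" and "p \<le> k" and "length ms = k"
  shows "Dk k ms n = Dk k (ms[p - 1 := - (ms ! (p - 1))]) n"
proof -
  define q where "q = p - 1"
  define ms_neg where "ms_neg = ms[q := - (ms ! q)]"
  have q: "q < k" using assms unfolding q_def by simp
  have len_neg: "length ms_neg = k" using assms(4) by (simp add: ms_neg_def)
  have double_neg: "ms_neg[q := - (ms_neg ! q)] = ms" using q assms(4) by (simp add: ms_neg_def)
  have invol: "rank_flip k q (rank_flip k q s) = s" if "s \<in> symbols_with_ranks k m n" for s m
    using rank_flip_involution[OF _ q] that unfolding symbols_with_ranks_def by blast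
  have to_neg: "rank_flip k q s \<in> symbols_with_ranks k ms_neg n"
    if "s \<in> symbols_with_ranks k ms n" for s
    using rank_flip_maps[OF q assms(4) that] unfolding ms_neg_def .
  have from_neg: "rank_flip k q s \<in> symbols_with_ranks k ms n"
    if "s \<in> symbols_with_ranks k ms_neg n" for s
    using rank_flip_maps[OF q len_neg that] unfolding double_neg .
  have "bij_betw (rank_flip k q) (symbols_with_ranks k ms n) (symbols_with_ranks k ms_neg n)"
    using to_neg from_neg invol by (intro bij_betw_byWitness[where f' = "rank_flip k q"]) blast+
  then have "card (symbols_with_ranks k ms n) = card (symbols_with_ranks k ms_neg n)"
    by (rule bij_betw_same_card)
  then show ?thesis unfolding Dk_def symbols_with_ranks_def ms_neg_def q_def .
qed

end
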